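(* In the session calculus, strong fairness of groups of components (SG) coincides with strong fairness of components (SC), i.e. a path is SG-fair iff it is SC-fair. Moreover, weak fairness of groups of components (WG) is weaker than weak fairness of components (WC): every WC-fair path is WG-fair.
   Context: Session calculus: threads $P ::= \mathbf{end} \mid \bigoplus_{i\in I} p_i!\lambda_i;P_i \mid \sum_{i\in I} p_i?\lambda_i;P_i \mid X \mid \mu X.P$ (guarded recursion), thread states additionally $\langle q!\lambda\rangle;P$; networks $p[\![P]\!]\mid 0\mid N\parallel N$ with distinct locations and closed threads, modulo associativity/commutativity/unit. Transitions: (choice) $p[\![\bigoplus_{i\in I}p_i!\lambda_i;P_i]\!]\parallel N \xrightarrow{\tau} p[\![\langle p_k!\lambda_k\rangle;P_k]\!]\parallel N$; (unfold) $p[\![\mu X.P]\!]\parallel N\xrightarrow{\tau} p[\![P\{\mu X.P/X\}]\!]\parallel N$; (comm) $p_k[\![\langle q!\lambda_k\rangle;Q]\!]\parallel q[\![\sum_{i\in I}p_i?\lambda_i;P_i]\!]\parallel N \xrightarrow{(p_k,\lambda_k,q)} p_k[\![Q]\!]\parallel q[\![P_k]\!]\parallel N$. $\mathrm{comp}(t)$ is the moving location for a $\tau$-transition and $\{p,q\}$ for label $(p,\lambda,q)$. A path is a network state with a maximal sequence of transitions. For a notion of task (with "enabled in a state" and "engaged in by a path"): a task is relentlessly enabled on a path if every suffix contains a state where it is enabled, perpetually enabled if enabled in every state; a path $\pi$ is strongly fair if for every suffix $\pi'$ each task relentlessly enabled on $\pi'$ is engaged in by $\pi'$, and weakly fair if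 for every suffix $\pi'$ each task perpetually enabled on $\pi'$ is engaged in by $\pi'$. Components (SC/WC): tasks are locations $p$; enabled in $N$ if some transition $t$ from $N$ has $p\in\mathrm{comp}(t)$; engaged in if the path contains $t$ with $p\in\mathrm{comp}(t)$. Groups of components (SG/WG): tasks are sets $G$ of locations; enabled in $N$ if some transition $t$ from $N$ has $\mathrm{comp}(t)=G$; engaged in if the path contains $t$ with $\mathrm{comp}(t)=G$. *)

theory Defs
  imports Main "HOL-Library.Extended_Nat"
begin

text \<open>Threads and thread states in one datatype. Index sets of internal/external
  choices are rendered as finite lists of triples (location, label, continuation).
  The constructor Out q l P is the thread state with a committed output q!l.\<close>

datatype ('loc, 'lab, 'var) thread =
    End
  | Choice "('loc \<times> 'lab \<times> ('loc, 'lab, 'var) thread) list"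
  | Branch "('loc \<times> 'lab \<times> ('loc, 'lab, 'var) thread) list"
  | Var 'var
  | Mu 'var "('loc, 'lab, 'var) thread"
  | Out 'loc 'lab "('loc, 'lab, 'var) thread"

fun fvs :: "('loc, 'lab, 'var) thread \<Rightarrow> 'var set" where
  "fvs End = {}"
| "fvs (Choice xs) = (\<Union>x\<in>set xs. fvs (snd (snd x)))"
| "fvs (Branch xs) = (\<Union>x\<in>set xs. fvs (snd (snd x)))"
| "fvs (Var X) = {X}"
| "fvs (Mu X P) = fvs P - {X}"
| "fvs (Out q l P) = fvs P"

fun unguarded :: "('loc, 'lab, 'var) thread \<Rightarrow> 'var set" where
  "unguarded End = {}"
| "unguarded (Choice xs) = {}"
| "unguarded (Branch xs) = {}"
| "unguarded (Var X) = {X}"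
| "unguarded (Mu X P) = unguarded P - {X}"
| "unguarded (Out q l P) = {}"

fun guarded :: "('loc, 'lab, 'var) thread \<Rightarrow> bool" where
  "guarded End = True"
| "guarded (Choice xs) = (\<forall>x\<in>set xs. guarded (snd (snd x)))"
| "guarded (Branch xs) = (\<forall>x\<in>set xs. guarded (snd (snd x)))"
| "guarded (Var X) = True"
| "guarded (Mu X P) = (X \<notin> unguarded P \<and> guarded P)"
| "guarded (Out q l P) = guarded P"

fun is_thread :: "('loc, 'lab, 'var) thread \<Rightarrow> bool" where
  "is_thread End = True"
| "is_thread (Choice xs) = (xs \<noteq> [] \<and> (\<forall>x\<in>set xs. is_thread (snd (snd x))))"
| "is_thread (Branch xs) = (xs \<noteq> [] \<and> (\<forall>x\<in>set xs. is_thread (snd (snd x))))"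
| "is_thread (Var X) = True"
| "is_thread (Mu X P) = is_thread P"
| "is_thread (Out q l P) = False"

definition wf_proc :: "('loc, 'lab, 'var) thread \<Rightarrow> bool" where
  "wf_proc P \<longleftrightarrow> is_thread P \<and> fvs P = {} \<and> guarded P"

fun wf_tstate :: "('loc, 'lab, 'var) thread \<Rightarrow> bool" where
  "wf_tstate (Out q l P) = wf_proc P"
| "wf_tstate P = wf_proc P"

text \<open>Substitution (capture is not an issue since only closed terms are substituted).\<close>
fun subst :: "'var \<Rightarrow> ('loc, 'lab, 'var) thread \<Rightarrow> ('loc, 'lab, 'var) thread \<Rightarrow> ('loc, 'lab, 'var) thread" where
  "subst X Q End = End"
| "subst X Q (Choice xs) = Choice (map (\<lambda>(q, l, P). (q, l, subst X Q P)) xs)"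
| "subst X Q (Branch xs) = Branch (map (\<lambda>(q, l, P). (q, l, subst X Q P)) xs)"
| "subst X Q (Var Y) = (if X = Y then Q else Var Y)"
| "subst X Q (Mu Y P) = (if X = Y then Mu Y P else Mu Y (subst X Q P))"
| "subst X Q (Out q l P) = Out q l (subst X Q P)"

text \<open>Networks modulo ACU with distinct locations: finite partial maps from locations
  to thread states.\<close>
type_synonym ('loc, 'lab, 'var) net = "'loc \<Rightarrow> ('loc, 'lab, 'var) thread option"

definition wf_net :: "('loc, 'lab, 'var) net \<Rightarrow> bool" where
  "wf_net N \<longleftrightarrow> finite (dom N) \<and> (\<forall>p P. N p = Some P \<longrightarrow> wf_tstate P)"

datatype ('loc, 'lab) act = Tau 'loc | Comm 'loc 'lab 'loc

fun comp :: "('loc, 'lab) act \<Rightarrow> 'loc set" where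
  "comp (Tau p) = {p}"
| "comp (Comm p l q) = {p, q}"

inductive step :: "('loc, 'lab, 'var) net \<Rightarrow> ('loc, 'lab) act \<Rightarrow> ('loc, 'lab, 'var) net \<Rightarrow> bool" where
  choice: "\<lbrakk> N p = Some (Choice xs); k < length xs; xs ! k = (q, l, P) \<rbrakk>
           \<Longrightarrow> step N (Tau p) (N(p \<mapsto> Out q l P))"
| unfold: "N p = Some (Mu X P) \<Longrightarrow> step N (Tau p) (N(p \<mapsto> subst X (Mu X P) P))"
| comm: "\<lbrakk> N p = Some (Out q l Q); N q = Some (Branch ys); k < length ys; ys ! k = (p, l, P) \<rbrakk>
         \<Longrightarrow> step N (Comm p l q) (N(p \<mapsto> Q, q \<mapsto> P))"

text \<open>A path is given by states s 0, s 1, ..., transitions a 0, a 1, ... and its length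
  len (number of transitions, possibly infinite). It is maximal: if finite, its last
  state has no outgoing transition. Values of s and a beyond len are irrelevant.\<close>
definition is_path :: "(nat \<Rightarrow> ('loc, 'lab, 'var) net) \<Rightarrow> (nat \<Rightarrow> ('loc, 'lab) act) \<Rightarrow> enat \<Rightarrow> bool" where
  "is_path s a len \<longleftrightarrow>
     (\<forall>i. enat i < len \<longrightarrow> step (s i) (a i) (s (Suc i))) \<and>
     (\<forall>n. len = enat n \<longrightarrow> \<not> (\<exists>t N'. step (s n) t N'))"

text \<open>en N T: task T enabled in state N; eng t T: transition t engages in task T.
  The suffix starting at state index j (j \<le> len) is considered.\<close>

definition relentlessly_enabled where
  "relentlessly_enabled en s (len :: enat) j T \<longleftrightarrow>
     (\<forall>k. j \<le> k \<and> enat k \<le> len \<longrightarrow> (\<exists>m. k \<le> m \<and> enat m \<le> len \<and> en (s m) T))"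

definition perpetually_enabled where
  "perpetually_enabled en s (len :: enat) j T \<longleftrightarrow>
     (\<forall>m. j \<le> m \<and> enat m \<le> len \<longrightarrow> en (s m) T)"

definition engaged where
  "engaged eng a (len :: enat) j T \<longleftrightarrow> (\<exists>m. j \<le> m \<and> enat m < len \<and> eng (a m) T)"

definition strongly_fair where
  "strongly_fair en eng s a len \<longleftrightarrow>
     (\<forall>j T. enat j \<le> len \<longrightarrow> relentlessly_enabled en s len j T \<longrightarrow> engaged eng a len j T)"

definition weakly_fair where
  "weakly_fair en eng s a len \<longleftrightarrow>
     (\<forall>j T. enat j \<le> len \<longrightarrow> perpetually_enabled en s len j T \<longrightarrow> engaged eng a len j T)"

definition en_C :: "('loc, 'lab, 'var) net \<Rightarrow> 'loc \<Rightarrow> bool" where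
  "en_C N p \<longleftrightarrow> (\<exists>t N'. step N t N' \<and> p \<in> comp t)"

definition eng_C :: "('loc, 'lab) act \<Rightarrow> 'loc \<Rightarrow> bool" where
  "eng_C t p \<longleftrightarrow> p \<in> comp t"

definition en_G :: "('loc, 'lab, 'var) net \<Rightarrow> 'loc set \<Rightarrow> bool" where
  "en_G N G \<longleftrightarrow> (\<exists>t N'. step N t N' \<and> comp t = G)"

definition eng_G :: "('loc, 'lab) act \<Rightarrow> 'loc set \<Rightarrow> bool" where
  "eng_G t G \<longleftrightarrow> comp t = G"

definition SC_fair where "SC_fair s a len \<longleftrightarrow> strongly_fair en_C eng_C s a len"
definition WC_fair where "WC_fair s a len \<longleftrightarrow> weakly_fair en_C eng_C s a len"
definition SG_fair where "SG_fair s a len \<longleftrightarrow> strongly_fair en_G eng_G s a len"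
definition WG_fair where "WG_fair s a len \<longleftrightarrow> weakly_fair en_G eng_G s a len"

end

theory Submission
  imports Defs
begin

text \<open>Every transition has an initiator: the moving location of a \<open>\<tau>\<close>-step, or the sender of a
  communication. Its current thread state alone determines the set of components of any
  transition it takes part in, since a selection, an unfolding and a committed output each
  admit only one kind of transition. Hence if a group \<open>G\<close> is relentlessly (resp. perpetually)
  enabled, so is the initiator \<open>p\<close> of some transition \<open>t\<close> with \<open>comp t = G\<close>, and once \<open>p\<close> is
  engaged, the first transition involving it after \<open>t\<close> was enabled has components exactly \<open>G\<close>; this gives SC \<open>\<Rightarrow>\<close> SG and
  WC \<open>\<Rightarrow>\<close> WG. Conversely, the locations of a network never change along a path, so only
  finitely many groups can ever be enabled; if a location is relentlessly enabled, one of
  the finitely many groups containing it is relentlessly enabled, and SG-fairness engages it.\<close>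

fun initiator :: "('loc, 'lab) act \<Rightarrow> 'loc" where
  "initiator (Tau p) = p"
| "initiator (Comm p l q) = p"

lemma initiator_in_comp: "initiator t \<in> comp t"
  by (cases t) auto

lemma step_unchanged_outside_comp: "step N t N' \<Longrightarrow> p \<notin> comp t \<Longrightarrow> N' p = N p"
  by (induct rule: step.induct) auto

lemma step_dom_eq: "step N t N' \<Longrightarrow> dom N' = dom N"
  by (induct rule: step.induct) (auto split: if_splits)

lemma step_comp_subset_dom: "step N t N' \<Longrightarrow> comp t \<subseteq> dom N"
  by (induct rule: step.induct) auto

lemma step_comp_determined_by_initiator:
  assumes "step N t N1" and "step N' t' N2"
    and "N' (initiator t) = N (initiator t)" and "initiator t \<in> comp t'"
  shows "comp t' = comp t"
  using assms(1)
proof cases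
  case (choice p xs k q l P)
  then have "N' p = Some (Choice xs)" "initiator t = p" using assms(3) by auto
  with assms(2,4) show ?thesis using choice by cases auto
next
  case (unfold p X P)
  then have "N' p = Some (Mu X P)" "initiator t = p" using assms(3) by auto
  with assms(2,4) show ?thesis using unfold by cases auto
next
  case (comm p q l Q ys k P)
  then have "N' p = Some (Out q l Q)" "initiator t = p" using assms(3) by auto
  with assms(2,4) show ?thesis using comm by cases auto
qed

lemma path_step: "is_path s a len \<Longrightarrow> enat i < len \<Longrightarrow> step (s i) (a i) (s (Suc i))"
  unfolding is_path_def by blast

lemma path_dom_eq:
  assumes "is_path s a len" and "enat m \<le> len"
  shows "dom (s m) = dom (s 0)"
  using assms(2)
proof (induction m)
  case (Suc m)
  then have "enat m < len" by (simp add: Suc_ile_eq)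
  with assms(1) show ?case using Suc step_dom_eq[OF path_step] by (metis order_less_imp_le)
qed simp

lemma path_unchanged_if_not_involved:
  assumes "is_path s a len" and "j \<le> n" and "enat n \<le> len"
    and "\<And>i. j \<le> i \<Longrightarrow> i < n \<Longrightarrow> p \<notin> comp (a i)"
  shows "s n p = s j p"
  using assms(2-4)
proof (induction n rule: dec_induct)
  case (step k)
  then have "enat k < len" by (simp add: Suc_ile_eq)
  then have "s (Suc k) p = s k p"
    using step.prems(2) step.hyps by (intro step_unchanged_outside_comp[OF path_step[OF assms(1)]]) auto
  also have "s k p = s j p"
    using step.IH step.prems \<open>enat k < len\<close> by (simp add: order_less_imp_le)
  finally show ?case .
qed simp

lemma relentlessly_enabled_finite_path:
  assumes "is_path s a (enat n)" and "j \<le> n"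
  shows "\<not> relentlessly_enabled en_C s (enat n) j p"
  using assms unfolding is_path_def relentlessly_enabled_def en_C_def by fastforce

lemma relentlessly_enabled_infinite_iff:
  "relentlessly_enabled en s \<infinity> j T \<longleftrightarrow> infinite {m. j \<le> m \<and> en (s m) T}"
  unfolding relentlessly_enabled_def infinite_nat_iff_unbounded_le
  by (simp, meson le_max_iff_disj max.cobounded1 order_trans)

lemma engaged_initiator_imp_engaged_comp:
  assumes path: "is_path s a len" and enabled: "step (s j) t N'"
    and "engaged eng_C a len j (initiator t)"
  shows "engaged eng_G a len j (comp t)"
proof -
  let ?involved = "\<lambda>n. j \<le> n \<and> enat n < len \<and> initiator t \<in> comp (a n)"
  obtain n where n: "?involved n" and first: "\<And>i. i < n \<Longrightarrow> \<not> ?involved i"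
    using assms(3) exists_least_iff[of ?involved] unfolding engaged_def eng_C_def by blast
  have "\<And>i. j \<le> i \<Longrightarrow> i < n \<Longrightarrow> initiator t \<notin> comp (a i)"
    using first n by (meson enat_ord_simps(2) order_less_trans)
  then have "s n (initiator t) = s j (initiator t)"
    using path_unchanged_if_not_involved[OF path] n by (simp add: order_less_imp_le)
  then have "comp (a n) = comp t"
    using step_comp_determined_by_initiator[OF enabled path_step[OF path]] n by blast
  with n show ?thesis unfolding engaged_def eng_G_def by blast
qed

lemma SC_fair_imp_SG_fair:
  assumes path: "is_path s a len" and "SC_fair s a len"
  shows "SG_fair s a len"
  unfolding SG_fair_def strongly_fair_def
proof (intro allI impI)
  fix j G
  assume "enat j \<le> len" and rel: "relentlessly_enabled en_G s len j G"
  then obtain m t N' where m: "j \<le> m" "enat m \<le> len" and t: "step (s m) t N'" "comp t = G"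
    unfolding relentlessly_enabled_def en_G_def by blast
  have "relentlessly_enabled en_C s len m (initiator t)"
    unfolding relentlessly_enabled_def
  proof (intro allI impI)
    fix k assume "m \<le> k \<and> enat k \<le> len"
    then obtain m' where "k \<le> m'" "enat m' \<le> len" "en_G (s m') G"
      using rel m unfolding relentlessly_enabled_def by (meson order_trans)
    then show "\<exists>m'\<ge>k. enat m' \<le> len \<and> en_C (s m') (initiator t)"
      using t initiator_in_comp unfolding en_G_def en_C_def by blast
  qed
  then have "engaged eng_C a len m (initiator t)"
    using assms(2) m unfolding SC_fair_def strongly_fair_def by blast
  then have "engaged eng_G a len m G"
    using engaged_initiator_imp_engaged_comp[OF path t(1)] t(2) by blast
  with m(1) show "engaged eng_G a len j G"
    unfolding engaged_def by (meson order_trans)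
qed

lemma WC_fair_imp_WG_fair:
  assumes path: "is_path s a len" and "WC_fair s a len"
  shows "WG_fair s a len"
  unfolding WG_fair_def weakly_fair_def
proof (intro allI impI)
  fix j G
  assume j: "enat j \<le> len" and per: "perpetually_enabled en_G s len j G"
  then obtain t N' where t: "step (s j) t N'" "comp t = G"
    unfolding perpetually_enabled_def en_G_def by blast
  have "perpetually_enabled en_C s len j (initiator t)"
    using per t initiator_in_comp unfolding perpetually_enabled_def en_G_def en_C_def by blast
  then have "engaged eng_C a len j (initiator t)"
    using assms(2) j unfolding WC_fair_def weakly_fair_def by blast
  then show "engaged eng_G a len j G"
    using engaged_initiator_imp_engaged_comp[OF path t(1)] t(2) by blast
qed

lemma SG_fair_imp_SC_fair:
  assumes wf: "wf_net (s 0)" and path: "is_path s a len" and "SG_fair s a len"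
  shows "SC_fair s a len"
  unfolding SC_fair_def strongly_fair_def
proof (intro allI impI)
  fix j p
  assume j: "enat j \<le> len" and rel: "relentlessly_enabled en_C s len j p"
  have len: "len = \<infinity>"
  proof (cases len)
    case (enat n)
    then have "j \<le> n" using j by simp
    then have "\<not> relentlessly_enabled en_C s len j p"
      using relentlessly_enabled_finite_path[of s a n j p] path enat by simp
    with rel show ?thesis by contradiction
  qed simp
  let ?M = "{m. j \<le> m \<and> en_C (s m) p}"
  let ?groups = "{G \<in> Pow (dom (s 0)). p \<in> G}"
  have "infinite ?M"
    using rel len relentlessly_enabled_infinite_iff by metis
  moreover have "finite ?groups"
    using wf unfolding wf_net_def by simp
  moreover have "\<forall>m\<in>?M. \<exists>G\<in>?groups. en_G (s m) G"
  proof
    fix m assume "m \<in> ?M"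
    then obtain t N' where t: "step (s m) t N'" "p \<in> comp t"
      unfolding en_C_def by blast
    have "comp t \<subseteq> dom (s 0)"
      using step_comp_subset_dom[OF t(1)] path_dom_eq[OF path, of m] len by simp
    with t show "\<exists>G\<in>?groups. en_G (s m) G"
      unfolding en_G_def by blast
  qed
  ultimately obtain G where G: "p \<in> G" "infinite {m \<in> ?M. en_G (s m) G}"
    using pigeonhole_infinite_rel[of ?M ?groups "\<lambda>m G. en_G (s m) G"] by blast
  moreover have "{m \<in> ?M. en_G (s m) G} \<subseteq> {m. j \<le> m \<and> en_G (s m) G}"
    by auto
  ultimately have "infinite {m. j \<le> m \<and> en_G (s m) G}"
    using infinite_super by blast
  then have "engaged eng_G a len j G"
    using assms(3) j len relentlessly_enabled_infinite_iff
    unfolding SG_fair_def strongly_fair_def by metis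
  with G(1) show "engaged eng_C a len j p"
    unfolding engaged_def eng_G_def eng_C_def by blast
qed

theorem mainTheorem12:
  fixes s :: "nat \<Rightarrow> ('loc, 'lab, 'var) net" and a :: "nat \<Rightarrow> ('loc, 'lab) act" and len :: enat
  assumes "wf_net (s 0)" and "is_path s a len"
  shows "(SG_fair s a len \<longleftrightarrow> SC_fair s a len) \<and> (WC_fair s a len \<longrightarrow> WG_fair s a len)"
  using SG_fair_imp_SC_fair[OF assms] SC_fair_imp_SG_fair[OF assms(2)]
    WC_fair_imp_WG_fair[OF assms(2)] by blast

end
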